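(* Fix a total order on $I$ and index by pairs $(m,n)$ with $m<n$ (i.e. by the off-diagonal fields $\langle m,n\rangle$). Define the matrix $S^{J}_{\langle m,n\rangle\langle p,q\rangle}=S_{mp}S_{nq}-S_{mq}S_{np}$ and the diagonal matrix $T^{J}_{\langle m,n\rangle}=T_mT_n$. Then $S^J$ is unitary, and if $S$ and $T$ satisfy $(ST)^3=S^2$ then $(S^JT^J)^3=(S^J)^2$.
   Context: Let $\mathcal{A}$ be a rational conformal field theory with finite set of primary fields $I$, unitary symmetric modular matrix $S$ and diagonal modular matrix $T=\mathrm{diag}(T_i)$, $T_i=e^{2\pi i(h_i-c/24)}$. The matrix $S^J$ above is the fixed point resolution matrix proposed for the anti-symmetric identity current $J=(0,1)$ of the $\mathbb{Z}_2$ permutation orbifold of $\mathcal{A}$, whose fixed points are exactly the off-diagonal fields $\langle m,n\rangle$, $m\neq n$. *)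

theory Defs
  imports Complex_Main
begin

definition mat_mult :: "'a set \<Rightarrow> ('a \<Rightarrow> 'a \<Rightarrow> complex) \<Rightarrow> ('a \<Rightarrow> 'a \<Rightarrow> complex) \<Rightarrow> ('a \<Rightarrow> 'a \<Rightarrow> complex)" where
  "mat_mult A X Y = (\<lambda>i j. \<Sum>k\<in>A. X i k * Y k j)"

definition mat_adj :: "('a \<Rightarrow> 'a \<Rightarrow> complex) \<Rightarrow> ('a \<Rightarrow> 'a \<Rightarrow> complex)" where
  "mat_adj X = (\<lambda>i j. cnj (X j i))"

definition id_mat :: "'a \<Rightarrow> 'a \<Rightarrow> complex" where
  "id_mat = (\<lambda>i j. if i = j then 1 else 0)"

definition diag_mat :: "('a \<Rightarrow> complex) \<Rightarrow> 'a \<Rightarrow> 'a \<Rightarrow> complex" where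
  "diag_mat d = (\<lambda>i j. if i = j then d i else 0)"

definition mat_eq_on :: "'a set \<Rightarrow> ('a \<Rightarrow> 'a \<Rightarrow> complex) \<Rightarrow> ('a \<Rightarrow> 'a \<Rightarrow> complex) \<Rightarrow> bool" where
  "mat_eq_on A X Y \<longleftrightarrow> (\<forall>i\<in>A. \<forall>j\<in>A. X i j = Y i j)"

definition unitary_on :: "'a set \<Rightarrow> ('a \<Rightarrow> 'a \<Rightarrow> complex) \<Rightarrow> bool" where
  "unitary_on A X \<longleftrightarrow> mat_eq_on A (mat_mult A (mat_adj X) X) id_mat
                      \<and> mat_eq_on A (mat_mult A X (mat_adj X)) id_mat"

definition offdiag :: "('i::linorder \<times> 'i) set" where
  "offdiag = {(m, n). m < n}"

definition SJ :: "('i \<Rightarrow> 'i \<Rightarrow> complex) \<Rightarrow> ('i \<times> 'i) \<Rightarrow> ('i \<times> 'i) \<Rightarrow> complex" where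
  "SJ S = (\<lambda>(m, n) (p, q). S m p * S n q - S m q * S n p)"

definition TJ :: "('i \<Rightarrow> complex) \<Rightarrow> ('i \<times> 'i) \<Rightarrow> ('i \<times> 'i) \<Rightarrow> complex" where
  "TJ T = diag_mat (\<lambda>(m, n). T m * T n)"

end

theory Submission imports Defs begin

(* The matrix SJ S, indexed by pairs (m,n) with m < n, is the second exterior
   power of S: its entries are the 2x2 minors of S.  The whole theorem rests on
   the Cauchy-Binet formula for 2x2 minors, which says that taking exterior
   squares is multiplicative:  SJ A * SJ B = SJ (A * B)  on the off-diagonal pairs.
   It is proved by expanding the product of minors over all pairs (k,l); the
   summand is symmetric in k,l and vanishes on the diagonal, so the full double
   sum is twice the sum over k < l.  Together with the elementary facts that SJ
   commutes with the adjoint, sends the identity to the identity and the diagonal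
   matrix T to TJ T, multiplicativity transports both unitarity of S and the
   modular relation (ST)^3 = S^2 to SJ S and TJ T. *)

lemma sum_symmetric_pairs:
  fixes f :: "'i::{finite,linorder} \<Rightarrow> 'i \<Rightarrow> 'a::comm_semiring_1"
  assumes f_sym: "\<And>k l. f k l = f l k" and f_diag: "\<And>k. f k k = 0"
  shows "(\<Sum>k\<in>UNIV. \<Sum>l\<in>UNIV. f k l) = 2 * (\<Sum>(k,l)\<in>offdiag. f k l)"
proof -
  let ?lower = "{(k::'i, l). l < k}" and ?diag = "{(k::'i, l). k = l}"
  have split_UNIV: "UNIV = (offdiag \<union> ?lower) \<union> ?diag"
    by (auto simp: offdiag_def not_less_iff_gr_or_eq)
  have lower_swap: "?lower = prod.swap ` offdiag"
    by (auto simp: offdiag_def)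
  have "(\<Sum>k\<in>UNIV. \<Sum>l\<in>UNIV. f k l) = (\<Sum>(k,l)\<in>UNIV. f k l)"
    by (simp add: sum.cartesian_product)
  also have "\<dots> = (\<Sum>(k,l)\<in>offdiag. f k l) + (\<Sum>(k,l)\<in>?lower. f k l)
                   + (\<Sum>(k,l)\<in>?diag. f k l)"
    unfolding split_UNIV
    by (subst sum.union_disjoint, simp, simp, fastforce simp: offdiag_def)+ simp
  also have "(\<Sum>(k,l)\<in>?diag. f k l) = 0"
    by (rule sum.neutral) (auto simp: f_diag)
  also have "(\<Sum>(k,l)\<in>?lower. f k l) = (\<Sum>(k,l)\<in>offdiag. f k l)"
    unfolding lower_swap by (simp add: sum.reindex case_prod_beta f_sym)
  finally show ?thesis by (simp add: mult_2)
qed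

lemma sum_minor_products:
  fixes A B :: "'i::finite \<Rightarrow> 'i \<Rightarrow> complex"
  shows "(\<Sum>k\<in>UNIV. \<Sum>l\<in>UNIV.
            (A m k * A n l - A m l * A n k) * (B k p * B l q - B k q * B l p))
       = 2 * SJ (mat_mult UNIV A B) (m,n) (p,q)"
proof -
  let ?AB = "mat_mult UNIV A B"
  have straight: "(\<Sum>k\<in>UNIV. \<Sum>l\<in>UNIV. A m k * A n l * (B k p' * B l q'))
      = ?AB m p' * ?AB n q'" for p' q'
    by (simp add: mat_mult_def sum_product mult_ac)
  have crossed: "(\<Sum>k\<in>UNIV. \<Sum>l\<in>UNIV. A m l * A n k * (B k p' * B l q'))
      = ?AB m q' * ?AB n p'" for p' q'
    by (subst sum.swap) (simp add: mat_mult_def sum_product mult_ac)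
  have "(\<Sum>k\<in>UNIV. \<Sum>l\<in>UNIV.
            (A m k * A n l - A m l * A n k) * (B k p * B l q - B k q * B l p))
    = (\<Sum>k\<in>UNIV. \<Sum>l\<in>UNIV. A m k * A n l * (B k p * B l q))
      - (\<Sum>k\<in>UNIV. \<Sum>l\<in>UNIV. A m k * A n l * (B k q * B l p))
      - (\<Sum>k\<in>UNIV. \<Sum>l\<in>UNIV. A m l * A n k * (B k p * B l q))
      + (\<Sum>k\<in>UNIV. \<Sum>l\<in>UNIV. A m l * A n k * (B k q * B l p))"
    by (simp add: algebra_simps sum.distrib sum_subtractf)
  then show ?thesis
    using straight[of p q] straight[of q p] crossed[of p q] crossed[of q p]
    by (simp add: SJ_def algebra_simps)
qed

lemma SJ_mult:
  fixes A B :: "'i::{finite,linorder} \<Rightarrow> 'i \<Rightarrow> complex"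
  shows "mat_mult offdiag (SJ A) (SJ B) x y = SJ (mat_mult UNIV A B) x y"
proof -
  obtain m n p q where xy: "x = (m,n)" "y = (p,q)" by (cases x, cases y) auto
  define f where "f k l = (A m k * A n l - A m l * A n k) * (B k p * B l q - B k q * B l p)"
    for k l
  have "2 * mat_mult offdiag (SJ A) (SJ B) x y = 2 * (\<Sum>(k,l)\<in>offdiag. f k l)"
    by (simp add: xy mat_mult_def SJ_def f_def case_prod_beta)
  also have "\<dots> = (\<Sum>k\<in>UNIV. \<Sum>l\<in>UNIV. f k l)"
    by (rule sum_symmetric_pairs[symmetric]) (simp_all add: f_def algebra_simps)
  also have "\<dots> = 2 * SJ (mat_mult UNIV A B) x y"
    unfolding f_def xy by (rule sum_minor_products)
  finally show ?thesis by simp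
qed

text \<open>Multiplication on a carrier only depends on the entries inside it, so a
  product of matrices agreeing with SJ A and SJ B agrees with SJ (A * B).\<close>

lemma SJ_mult_compat:
  fixes A B :: "'i::{finite,linorder} \<Rightarrow> 'i \<Rightarrow> complex"
  assumes "mat_eq_on offdiag X (SJ A)" and "mat_eq_on offdiag Y (SJ B)"
  shows "mat_eq_on offdiag (mat_mult offdiag X Y) (SJ (mat_mult UNIV A B))"
proof -
  have "mat_mult offdiag X Y i j = mat_mult offdiag (SJ A) (SJ B) i j"
    if "i \<in> offdiag" "j \<in> offdiag" for i j
    using assms that unfolding mat_eq_on_def mat_mult_def by (auto intro!: sum.cong)
  then show ?thesis by (simp add: mat_eq_on_def SJ_mult)
qed

lemma SJ_adj: "mat_adj (SJ S) = SJ (mat_adj S)"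
  by (auto simp: fun_eq_iff mat_adj_def SJ_def)

lemma SJ_id: "mat_eq_on offdiag (SJ id_mat) id_mat"
  unfolding mat_eq_on_def offdiag_def SJ_def id_mat_def by auto

lemma SJ_diag: "mat_eq_on offdiag (TJ T) (SJ (diag_mat T))"
  unfolding mat_eq_on_def offdiag_def SJ_def TJ_def diag_mat_def by auto

lemma mat_eq_on_UNIV: "mat_eq_on UNIV X Y \<longleftrightarrow> X = Y"
  by (auto simp: mat_eq_on_def fun_eq_iff)

lemma SJ_unitary:
  fixes S :: "'i::{finite,linorder} \<Rightarrow> 'i \<Rightarrow> complex"
  assumes "unitary_on UNIV S"
  shows "unitary_on offdiag (SJ S)"
proof -
  have "mat_mult UNIV (mat_adj S) S = id_mat" "mat_mult UNIV S (mat_adj S) = id_mat"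
    using assms by (simp_all add: unitary_on_def mat_eq_on_UNIV)
  then show ?thesis
    using SJ_id by (simp add: unitary_on_def SJ_adj mat_eq_on_def SJ_mult)
qed

lemma SJ_modular:
  fixes S :: "'i::{finite,linorder} \<Rightarrow> 'i \<Rightarrow> complex" and T :: "'i \<Rightarrow> complex"
  defines "M \<equiv> mat_mult UNIV S (diag_mat T)"
    and "MJ \<equiv> mat_mult offdiag (SJ S) (TJ T)"
  assumes "mat_mult UNIV M (mat_mult UNIV M M) = mat_mult UNIV S S"
  shows "mat_eq_on offdiag (mat_mult offdiag MJ (mat_mult offdiag MJ MJ))
                           (mat_mult offdiag (SJ S) (SJ S))"
proof -
  have refl: "mat_eq_on offdiag (SJ S) (SJ S)" by (simp add: mat_eq_on_def)
  have MJ: "mat_eq_on offdiag MJ (SJ M)"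
    unfolding MJ_def M_def by (rule SJ_mult_compat[OF refl SJ_diag])
  have "mat_eq_on offdiag (mat_mult offdiag MJ (mat_mult offdiag MJ MJ))
                          (SJ (mat_mult UNIV M (mat_mult UNIV M M)))"
    by (intro SJ_mult_compat MJ)
  then show ?thesis
    by (simp add: assms(3) mat_eq_on_def SJ_mult)
qed

theorem mainTheorem7:
  fixes S :: "'i::{finite,linorder} \<Rightarrow> 'i \<Rightarrow> complex"
    and T :: "'i \<Rightarrow> complex"
    and h :: "'i \<Rightarrow> real" and c :: real
  assumes S_sym: "\<And>i j. S i j = S j i"
    and S_unitary: "unitary_on UNIV S"
    and T_def: "\<And>i. T i = exp (2 * pi * \<i> * complex_of_real (h i - c / 24))"
  shows "unitary_on offdiag (SJ S)
    \<and> (mat_eq_on UNIV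
           (mat_mult UNIV (mat_mult UNIV S (diag_mat T))
              (mat_mult UNIV (mat_mult UNIV S (diag_mat T)) (mat_mult UNIV S (diag_mat T))))
           (mat_mult UNIV S S)
       \<longrightarrow> mat_eq_on offdiag
           (mat_mult offdiag (mat_mult offdiag (SJ S) (TJ T))
              (mat_mult offdiag (mat_mult offdiag (SJ S) (TJ T)) (mat_mult offdiag (SJ S) (TJ T))))
           (mat_mult offdiag (SJ S) (SJ S)))"
  using SJ_unitary[OF S_unitary] SJ_modular[of S T] by (simp add: mat_eq_on_UNIV)

end
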